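(* Let $\beta>0$, $F>0$, and $(f_{0,k})_{k\ge1}$ with $\sum_k k^{2\beta}f_{0,k}^2\le F^2$. For $n\ge1$ let $X_k=f_{0,k}+n^{-1/2}\xi_k$, $k\ge1$, with $\xi_k$ i.i.d. $\mathcal N(0,1)$. Let $K_n=n^{1/(2\beta+1)}$, $N:=\{k:|f_{0,k}|\le1/\sqrt n\}$, and for $k\ge1,\ell\ge0$, $$A_{k,\ell}:=\Big\{|X_k|\le\sqrt{\tfrac{4\log(n(\ell+1)^2)}{n}}\Big\},\qquad A_n:=\bigcap_{K_n<k\le n,\,k\in N}A_{k,0}\ \cap\ \bigcap_{\ell\ge1}\ \bigcap_{\ell n<k\le(\ell+1)n,\,k\in N}A_{k,\ell}.$$ Then $P_{f_0}(A_n^c)\to0$ as $n\to\infty$.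
   Context: $P_{f_0}$ is the law of $(X_k)_{k\ge1}$ in the stated sequence model. *)

theory Defs
  imports "HOL-Probability.Probability"
begin

definition obsX :: "(nat \<Rightarrow> real) \<Rightarrow> nat \<Rightarrow> (nat \<Rightarrow> 'a \<Rightarrow> real) \<Rightarrow> nat \<Rightarrow> 'a \<Rightarrow> real" where
  "obsX f0 n \<xi> k \<omega> = f0 k + \<xi> k \<omega> / sqrt (real n)"

definition smallSet :: "(nat \<Rightarrow> real) \<Rightarrow> nat \<Rightarrow> nat set" where
  "smallSet f0 n = {k. 1 \<le> k \<and> \<bar>f0 k\<bar> \<le> 1 / sqrt (real n)}"

definition eventA :: "(nat \<Rightarrow> real) \<Rightarrow> nat \<Rightarrow> (nat \<Rightarrow> 'a \<Rightarrow> real) \<Rightarrow> nat \<Rightarrow> nat \<Rightarrow> 'a set" where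
  "eventA f0 n \<xi> k l = {\<omega>. \<bar>obsX f0 n \<xi> k \<omega>\<bar> \<le> sqrt (4 * ln (real n * (real l + 1)^2) / real n)}"

definition eventAn :: "'a measure \<Rightarrow> real \<Rightarrow> (nat \<Rightarrow> real) \<Rightarrow> nat \<Rightarrow> (nat \<Rightarrow> 'a \<Rightarrow> real) \<Rightarrow> 'a set" where
  "eventAn M \<beta> f0 n \<xi> = space M
     \<inter> (\<Inter>k\<in>{k. real n powr (1 / (2 * \<beta> + 1)) < real k \<and> k \<le> n \<and> k \<in> smallSet f0 n}. eventA f0 n \<xi> k 0)
     \<inter> (\<Inter>l\<in>{l. 1 \<le> l}. \<Inter>k\<in>{k. l * n < k \<and> k \<le> (l + 1) * n \<and> k \<in> smallSet f0 n}. eventA f0 n \<xi> k l)"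

end

theory Submission
  imports Defs "HOL-Real_Asymp.Real_Asymp"
begin

text \<open>
  For \<open>k \<in> N\<close> the bias \<open>|f\<^sub>0\<^sub>,\<^sub>k| \<le> n\<^sup>-\<^sup>1\<^sup>/\<^sup>2\<close> is negligible, so failure of \<open>A\<^sub>k\<^sub>,\<^sub>l\<close> forces
  \<open>|\<xi>\<^sub>k| > 2 sqrt(log(n(l+1)\<^sup>2)) - 1\<close>. The Gaussian tail bound \<open>P(|\<xi>| > y) \<le> 2 exp(-3y\<^sup>2/8)\<close>
  makes this event have probability at most \<open>2 e\<^sup>2 n\<^sup>-\<^sup>5\<^sup>/\<^sup>4 (l+1)\<^sup>-\<^sup>5\<^sup>/\<^sup>2\<close>. The \<open>l\<close>-th block
  has at most \<open>n + 1\<close> indices, so a union bound gives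
  \<open>P(A\<^sub>n\<^sup>c) \<le> 2 e\<^sup>2 (n+1) n\<^sup>-\<^sup>5\<^sup>/\<^sup>4 \<Sum>\<^sub>l (l+1)\<^sup>-\<^sup>5\<^sup>/\<^sup>2 \<longrightarrow> 0\<close>.
\<close>

lemma std_normal_density_mult_exp:
  "std_normal_density t * exp (3 * t\<^sup>2 / 8) = 2 * normal_density 0 2 t"
proof -
  have "sqrt (2 * pi * 2\<^sup>2) = 2 * sqrt (2 * pi)"
    by (metis mult.commute real_sqrt_mult real_sqrt_abs abs_numeral power2_eq_square
        real_sqrt_mult_self)
  moreover have "exp (- t\<^sup>2 / 2) * exp (3 * t\<^sup>2 / 8) = exp (- (t - 0)\<^sup>2 / (2 * 2\<^sup>2))"
    by (simp add: exp_add[symmetric])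
  ultimately show ?thesis
    unfolding std_normal_density_def normal_density_def by (simp add: field_simps)
qed

text \<open>The indicator of \<open>{y < |t|}\<close> is dominated by \<open>exp (3 (t\<^sup>2 - y\<^sup>2) / 8)\<close>.\<close>
lemma std_normal_density_indicator_le:
  assumes "0 \<le> y"
  shows "std_normal_density t * indicator {t. y < \<bar>t\<bar>} t
    \<le> 2 * exp (- 3 * y\<^sup>2 / 8) * normal_density 0 2 t"
proof (cases "y < \<bar>t\<bar>")
  case True
  then have "y\<^sup>2 \<le> t\<^sup>2"
    using assms by (metis abs_le_square_iff abs_of_nonneg less_imp_le)
  then have "1 \<le> exp (3 * t\<^sup>2 / 8) * exp (- 3 * y\<^sup>2 / 8)"
    by (simp add: exp_add[symmetric])
  then have "std_normal_density t \<le> std_normal_density t * exp (3 * t\<^sup>2 / 8) * exp (- 3 * y\<^sup>2 / 8)"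
    using mult_left_mono[of 1 _ "std_normal_density t"] by (simp add: mult.assoc)
  with True show ?thesis
    by (simp add: std_normal_density_mult_exp mult_ac)
qed simp

lemma (in prob_space) std_normal_abs_tail_le:
  assumes "distributed M lborel X std_normal_density" and "0 \<le> y"
  shows "prob {\<omega> \<in> space M. y < \<bar>X \<omega>\<bar>} \<le> 2 * exp (- 3 * y\<^sup>2 / 8)"
proof -
  let ?A = "{t::real. y < \<bar>t\<bar>}"
  have "{\<omega> \<in> space M. y < \<bar>X \<omega>\<bar>} = X -` ?A \<inter> space M"
    by auto
  then have "emeasure M {\<omega> \<in> space M. y < \<bar>X \<omega>\<bar>}
      = (\<integral>\<^sup>+t. ennreal (std_normal_density t) * indicator ?A t \<partial>lborel)"
    by (simp only:) (rule distributed_emeasure[OF assms(1)], measurable)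
  also have "\<dots> \<le> (\<integral>\<^sup>+t. ennreal (2 * exp (- 3 * y\<^sup>2 / 8)) * ennreal (normal_density 0 2 t) \<partial>lborel)"
  proof (rule nn_integral_mono)
    fix t
    show "ennreal (std_normal_density t) * indicator ?A t
        \<le> ennreal (2 * exp (- 3 * y\<^sup>2 / 8)) * ennreal (normal_density 0 2 t)"
      using ennreal_leI[OF std_normal_density_indicator_le[OF assms(2), of t]]
      by (cases "y < \<bar>t\<bar>") (simp_all add: ennreal_mult'[symmetric])
  qed
  also have "\<dots> = ennreal (2 * exp (- 3 * y\<^sup>2 / 8))"
    by (simp add: nn_integral_cmult nn_integral_eq_integral)
  finally show ?thesis
    by (simp add: emeasure_eq_measure)
qed

text \<open>
  With \<open>x = n (l+1)\<^sup>2\<close> and \<open>k \<in> N\<close>, the event \<open>A\<^sub>k\<^sub>,\<^sub>l\<close> holds once \<open>|\<xi>\<^sub>k| \<le> noise_threshold x\<close>: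
  this is \<open>sqrt n\<close> times the radius \<open>sqrt (4 log x / n)\<close> minus the bias bound \<open>n\<^sup>-\<^sup>1\<^sup>/\<^sup>2\<close>.
\<close>
definition noise_threshold :: "real \<Rightarrow> real" where
  "noise_threshold x = 2 * sqrt (ln x) - 1"

lemma noise_threshold_nonneg:
  assumes "2 \<le> x"
  shows "0 \<le> noise_threshold x"
proof -
  have "1 / 4 \<le> ln x"
    using ln2_ge_two_thirds ln_le_cancel_iff[of 2 x] assms by linarith
  then have "sqrt (1 / 4) \<le> sqrt (ln x)"
    by (rule real_sqrt_le_mono)
  then show ?thesis
    by (simp add: noise_threshold_def real_sqrt_divide)
qed

lemma exp_noise_threshold_le:
  assumes "1 \<le> x"
  shows "exp (- 3 * (noise_threshold x)\<^sup>2 / 8) \<le> exp 2 * x powr (- 5 / 4)"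
proof -
  define s where "s = sqrt (ln x)"
  have s_squared: "s\<^sup>2 = ln x"
    using assms by (simp add: s_def)
  have "- 3 * (2 * s - 1)\<^sup>2 / 8 = 2 - 5 / 4 * s\<^sup>2 - (s - 3)\<^sup>2 / 4 - 1 / 8"
    by (simp add: power2_eq_square field_simps)
  then have "- 3 * (2 * s - 1)\<^sup>2 / 8 \<le> 2 + ln x * (- 5 / 4)"
    using s_squared zero_le_power2[of "s - 3"] by linarith
  then have "exp (- 3 * (2 * s - 1)\<^sup>2 / 8) \<le> exp 2 * exp (ln x * (- 5 / 4))"
    by (simp add: exp_add[symmetric])
  also have "exp (ln x * (- 5 / 4)) = x powr (- 5 / 4)"
    using assms by (simp add: powr_def)
  finally show ?thesis
    by (simp add: noise_threshold_def s_def)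
qed

lemma powr_mult_square:
  fixes a b p :: real
  assumes "0 < b"
  shows "(a * b\<^sup>2) powr p = a powr p * b powr (2 * p)"
proof -
  have "b\<^sup>2 = b powr 2"
    using powr_realpow[OF assms, of 2] by simp
  then show ?thesis
    by (simp only: powr_mult powr_powr mult.commute)
qed

lemma not_eventA_imp_noise_threshold_less:
  assumes "1 \<le> n" and "k \<in> smallSet f0 n" and "\<omega> \<notin> eventA f0 n \<xi> k l"
  shows "noise_threshold (real n * (real l + 1)\<^sup>2) < \<bar>\<xi> k \<omega>\<bar>"
proof -
  let ?L = "ln (real n * (real l + 1)\<^sup>2)"
  have sqrt_n_pos: "0 < sqrt (real n)"
    using assms(1) by simp
  have "2 * sqrt ?L / sqrt (real n) = sqrt (4 * ?L / real n)"
    by (simp add: real_sqrt_divide real_sqrt_mult)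
  also have "\<dots> < \<bar>f0 k + \<xi> k \<omega> / sqrt (real n)\<bar>"
    using assms(3) by (simp add: eventA_def obsX_def)
  also have "\<dots> \<le> \<bar>f0 k\<bar> + \<bar>\<xi> k \<omega>\<bar> / sqrt (real n)"
    using abs_triangle_ineq[of "f0 k" "\<xi> k \<omega> / sqrt (real n)"] sqrt_n_pos by (simp add: abs_div)
  also have "\<dots> \<le> (1 + \<bar>\<xi> k \<omega>\<bar>) / sqrt (real n)"
    using assms(2) by (simp add: smallSet_def add_divide_distrib)
  finally have "2 * sqrt ?L < 1 + \<bar>\<xi> k \<omega>\<bar>"
    using sqrt_n_pos by (simp add: divide_less_cancel)
  then show ?thesis
    by (simp add: noise_threshold_def)
qed

lemma compl_eventAn_subset_noise_exceedances:
  assumes "1 \<le> n"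
  shows "space M - eventAn M \<beta> f0 n \<xi> \<subseteq> (\<Union>l. \<Union>k\<in>{l * n..(l + 1) * n}.
    {\<omega> \<in> space M. noise_threshold (real n * (real l + 1)\<^sup>2) < \<bar>\<xi> k \<omega>\<bar>})"
  using not_eventA_imp_noise_threshold_less[OF assms]
  unfolding eventAn_def by (fastforce intro: UN_I[of 0])

lemma (in prob_space) prob_noise_threshold_less_le:
  assumes "distributed M lborel X std_normal_density" and "2 \<le> x"
  shows "prob {\<omega> \<in> space M. noise_threshold x < \<bar>X \<omega>\<bar>} \<le> 2 * exp 2 * x powr (- 5 / 4)"
proof -
  have "prob {\<omega> \<in> space M. noise_threshold x < \<bar>X \<omega>\<bar>} \<le> 2 * exp (- 3 * (noise_threshold x)\<^sup>2 / 8)"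
    using std_normal_abs_tail_le[OF assms(1) noise_threshold_nonneg[OF assms(2)]] .
  also have "\<dots> \<le> 2 * exp 2 * x powr (- 5 / 4)"
    using exp_noise_threshold_le[of x] assms(2) by simp
  finally show ?thesis .
qed

lemma (in prob_space) prob_compl_eventAn_le:
  assumes gaussian: "\<And>k. distributed M lborel (\<xi> k) std_normal_density" and "2 \<le> n"
  shows "prob (space M - eventAn M \<beta> f0 n \<xi>)
    \<le> 2 * exp 2 * (real n + 1) * real n powr (- 5 / 4) * (\<Sum>l. (real l + 1) powr (- 5 / 2))"
proof -
  define E where "E l k = {\<omega> \<in> space M. noise_threshold (real n * (real l + 1)\<^sup>2) < \<bar>\<xi> k \<omega>\<bar>}"
    for l k
  define B where "B l = (\<Union>k\<in>{l * n..(l + 1) * n}. E l k)" for l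
  define c where "c = 2 * exp 2 * (real n + 1) * real n powr (- 5 / 4)"
  have "random_variable borel (\<xi> k)" for k
    using distributed_measurable[OF gaussian[of k]] by simp
  then have E_events: "E l k \<in> events" for l k
    unfolding E_def by measurable
  then have B_events: "B l \<in> events" for l
    unfolding B_def by auto
  have B_le: "prob (B l) \<le> c * (real l + 1) powr (- 5 / 2)" for l
  proof -
    have "2 \<le> real n * (real l + 1)\<^sup>2"
      using mult_mono[of 2 "real n" 1 "(real l + 1)\<^sup>2"] assms(2) by simp
    then have "prob (E l k) \<le> 2 * exp 2 * (real n * (real l + 1)\<^sup>2) powr (- 5 / 4)" for k
      unfolding E_def by (rule prob_noise_threshold_less_le[OF gaussian])
    then have "prob (B l) \<le> (\<Sum>k\<in>{l * n..(l + 1) * n}. 2 * exp 2 * (real n * (real l + 1)\<^sup>2) powr (- 5 / 4))"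
      unfolding B_def using E_events
      by (intro order.trans[OF finite_measure_subadditive_finite sum_mono]) auto
    also have "\<dots> = c * (real l + 1) powr (- 5 / 2)"
      by (simp add: c_def powr_mult_square mult_ac)
    finally show ?thesis .
  qed
  have summable_powr: "summable (\<lambda>l. (real l + 1) powr (- 5 / 2))"
    using summable_Suc_iff[of "\<lambda>l. real l powr (- 5 / 2)"] summable_real_powr_iff[of "- 5 / 2"]
    by (simp add: add.commute)
  have summable_B: "summable (\<lambda>l. prob (B l))"
    using B_le by (intro summable_comparison_test[OF _ summable_mult[OF summable_powr, of c]]) auto
  have "prob (space M - eventAn M \<beta> f0 n \<xi>) \<le> prob (\<Union>l. B l)"
    using compl_eventAn_subset_noise_exceedances[of n M \<beta> f0 \<xi>] assms(2) B_events
    unfolding B_def E_def by (intro finite_measure_mono) auto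
  also have "\<dots> \<le> (\<Sum>l. prob (B l))"
    using B_events summable_B by (intro finite_measure_subadditive_countably) auto
  also have "\<dots> \<le> (\<Sum>l. c * (real l + 1) powr (- 5 / 2))"
    using B_le summable_B summable_mult[OF summable_powr] by (rule suminf_le)
  also have "\<dots> = c * (\<Sum>l. (real l + 1) powr (- 5 / 2))"
    using summable_powr by (rule suminf_mult)
  finally show ?thesis
    unfolding c_def .
qed

theorem mainTheorem7:
  fixes M :: "'a measure" and \<beta> F :: real and f0 :: "nat \<Rightarrow> real" and \<xi> :: "nat \<Rightarrow> 'a \<Rightarrow> real"
  assumes "prob_space M"
    and "\<beta> > 0" and "F > 0"
    and "summable (\<lambda>k. real k powr (2 * \<beta>) * (f0 k)\<^sup>2)"
    and "(\<Sum>k. real k powr (2 * \<beta>) * (f0 k)\<^sup>2) \<le> F\<^sup>2"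
    and "prob_space.indep_vars M (\<lambda>_. borel) \<xi> UNIV"
    and "\<And>k. distributed M lborel (\<xi> k) std_normal_density"
  shows "(\<lambda>n. measure M (space M - eventAn M \<beta> f0 n \<xi>)) \<longlonglongrightarrow> 0"
proof (rule tendsto_sandwich)
  define C where "C = 2 * exp 2 * (\<Sum>l. (real l + 1) powr (- 5 / 2))"
  show "\<forall>\<^sub>F n in sequentially. 0 \<le> measure M (space M - eventAn M \<beta> f0 n \<xi>)"
    by simp
  show "\<forall>\<^sub>F n in sequentially.
      measure M (space M - eventAn M \<beta> f0 n \<xi>) \<le> C * ((real n + 1) * real n powr (- 5 / 4))"
    using eventually_ge_at_top[of 2]
  proof eventually_elim
    case (elim n)
    then show ?case
      using prob_space.prob_compl_eventAn_le[OF assms(1) assms(7) elim]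
      by (simp add: C_def mult_ac)
  qed
  have "(\<lambda>n::nat. (real n + 1) * real n powr (- 5 / 4)) \<longlonglongrightarrow> 0"
    by real_asymp
  then show "(\<lambda>n. C * ((real n + 1) * real n powr (- 5 / 4))) \<longlonglongrightarrow> 0"
    by (rule tendsto_mult_right_zero)
qed simp

end
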